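(* Let $p \in (0,1)$. Define a sequence $\{X_i\}_{i\ge1}$ of $\{0,1\}$-valued random variables as follows: $X_1 = 1$ with probability one, and for each $n = 1,2,\dots$, let $U_n$ be uniformly distributed on $\{1,\dots,n\}$ (chosen independently of everything else) and set $X_{n+1} = X_{U_n}$ with probability $p$ and $X_{n+1} = 0$ with probability $1-p$ (all choices made independently). Let $H_n := \sum_{i=1}^n X_i$. For $k = 1,2,\dots$ and $n = 1,2,\dots$ let $$a_n^{(k)} := \frac{\Gamma(n+kp)}{\Gamma(n)\Gamma(1+kp)}.$$ Then for every $k = 1,2,\dots$ and every $n = 1,2,\dots$, $$E[(H_n)_k] = k! \sum_{i=1}^k (-1)^{k-i}\binom{k-1}{i-1} a_n^{(i)},$$ where $(x)_k := x(x-1)\cdots(x-k+1)$ denotes the falling factorial (with $(x)_1 = x$).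
   Context: This is the "laziest" minimal random walk model of elephant type (parameter $q=0$, initial step $X_1=1$). Equivalently, the conditional law of $X_{n+1}$ given $X_1,\dots,X_n$ is $P(X_{n+1}=1\mid X_1,\dots,X_n) = p H_n/n$. *)

theory Defs
  imports "HOL-Probability.Probability"
begin

definition falling_fact :: "real \<Rightarrow> nat \<Rightarrow> real" where
  "falling_fact x k = (\<Prod>i<k. x - real i)"

text \<open>Joint law of the path (X_1,...,X_n), as the list [X_1,...,X_n] (list index i-1 holds X_i).
  The value for n = 0 is the empty path.\<close>
fun walk :: "real \<Rightarrow> nat \<Rightarrow> nat list pmf" where
  "walk p 0 = return_pmf []"
| "walk p (Suc 0) = return_pmf [1]"
| "walk p (Suc (Suc m)) =
     do { xs \<leftarrow> walk p (Suc m);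
          u \<leftarrow> pmf_of_set {1..Suc m};
          b \<leftarrow> bernoulli_pmf p;
          return_pmf (xs @ [if b then xs ! (u - 1) else 0]) }"

definition H :: "nat list \<Rightarrow> real" where
  "H xs = real (sum_list xs)"

definition a_coef :: "real \<Rightarrow> nat \<Rightarrow> nat \<Rightarrow> real" where
  "a_coef p k n = Gamma (real n + real k * p) / (Gamma (real n) * Gamma (1 + real k * p))"

end

theory Submission
  imports Defs
begin

(* Given the path up to time n, the walk steps up with probability p H_n / n, so
   E f(H_(n+1)) = E [f(H_n) + (p H_n / n) (f(H_n + 1) - f(H_n))] for every f.
   For f = (.)_k the identities (h+1)_k - (h)_k = k (h)_(k-1) and
   h (h)_(k-1) = (h)_k + (k-1) (h)_(k-1) turn this into a recursion in n, triangular in k.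
   Since a^(i)_(n+1) = (1 + i p / n) a^(i)_n, k! times the (k-1)-st forward difference of
   i |-> a^(i+1)_n satisfies the same recursion, and both sides agree at n = 1. *)

definition binary_lists :: "nat \<Rightarrow> nat list set" where
  "binary_lists n = {xs. set xs \<subseteq> {0, 1} \<and> length xs = n}"

lemma finite_binary_lists: "finite (binary_lists n)"
  unfolding binary_lists_def by (rule finite_lists_length_eq) simp

lemma set_pmf_walk: "set_pmf (walk p n) \<subseteq> binary_lists n"
proof (induction p n rule: walk.induct)
  case (3 p m)
  show ?case
  proof
    fix xs assume "xs \<in> set_pmf (walk p (Suc (Suc m)))"
    then obtain ys u b where ys: "ys \<in> set_pmf (walk p (Suc m))" and u: "u \<in> {1..Suc m}"
      and xs: "xs = ys @ [if b then ys ! (u - 1) else 0]"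
      by auto
    have len: "length ys = Suc m" and bin: "set ys \<subseteq> {0, 1}"
      using 3 ys by (auto simp: binary_lists_def)
    have "ys ! (u - 1) \<in> set ys"
      using u len by (intro nth_mem) auto
    then show "xs \<in> binary_lists (Suc (Suc m))"
      using xs len bin by (auto simp: binary_lists_def)
  qed
qed (auto simp: binary_lists_def)

definition walk_step :: "real \<Rightarrow> nat list \<Rightarrow> nat list pmf" where
  "walk_step p xs =
     do { u \<leftarrow> pmf_of_set {1..length xs};
          b \<leftarrow> bernoulli_pmf p;
          return_pmf (xs @ [if b then xs ! (u - 1) else 0]) }"

lemma walk_Suc_Suc: "walk p (Suc (Suc m)) = walk p (Suc m) \<bind> walk_step p"
proof -
  have "length xs = Suc m" if "xs \<in> set_pmf (walk p (Suc m))" for xs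
    using that set_pmf_walk by (auto simp: binary_lists_def)
  then show ?thesis
    unfolding walk.simps(3) walk_step_def by (intro bind_pmf_cong) auto
qed

lemma expectation_walk_step:
  fixes f :: "real \<Rightarrow> real"
  assumes p: "0 \<le> p" "p \<le> 1" and xs: "xs \<in> binary_lists n" and n: "n \<noteq> 0"
  shows "measure_pmf.expectation (walk_step p xs) (\<lambda>ys. f (H ys))
         = f (H xs) + p * H xs / real n * (f (H xs + 1) - f (H xs))"
proof -
  have len: "length xs = n" and bin: "set xs \<subseteq> {0, 1}"
    using xs by (auto simp: binary_lists_def)
  have coin: "measure_pmf.expectation (bernoulli_pmf p \<bind>
                (\<lambda>b. return_pmf (xs @ [if b then xs ! i else 0]))) (\<lambda>ys. f (H ys))
              = f (H xs) + p * real (xs ! i) * (f (H xs + 1) - f (H xs))" if "i < n" for i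
  proof -
    have "xs ! i \<in> {0, 1}"
      using that len bin nth_mem by blast
    then show ?thesis
      using p by (subst pmf_expectation_bind[of UNIV]) (auto simp: UNIV_bool H_def algebra_simps)
  qed
  have "measure_pmf.expectation (walk_step p xs) (\<lambda>ys. f (H ys))
        = (\<Sum>u\<in>{1..n}. (f (H xs) + p * real (xs ! (u - 1)) * (f (H xs + 1) - f (H xs))) / real n)"
    unfolding walk_step_def len using n
    by (subst pmf_expectation_bind_pmf_of_set) (auto intro!: sum.cong simp: coin divide_inverse mult.commute)
  also have "\<dots> = (\<Sum>i<n. (f (H xs) + p * real (xs ! i) * (f (H xs + 1) - f (H xs))) / real n)"
    by (rule sum.reindex_bij_witness[of _ Suc "\<lambda>u. u - 1"]) auto
  also have "\<dots> = f (H xs) + p * (\<Sum>i<n. real (xs ! i)) / real n * (f (H xs + 1) - f (H xs))"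
    using n by (simp add: sum_divide_distrib[symmetric] sum.distrib sum_distrib_left
                          sum_distrib_right mult.assoc add_divide_distrib)
  also have "(\<Sum>i<n. real (xs ! i)) = H xs"
    unfolding H_def sum_list_sum_nth len by (simp add: atLeast0LessThan)
  finally show ?thesis .
qed

lemma expectation_walk_Suc_Suc:
  fixes f :: "real \<Rightarrow> real"
  assumes "0 \<le> p" "p \<le> 1"
  shows "measure_pmf.expectation (walk p (Suc (Suc m))) (\<lambda>xs. f (H xs))
         = measure_pmf.expectation (walk p (Suc m))
             (\<lambda>xs. f (H xs) + p * H xs / real (Suc m) * (f (H xs + 1) - f (H xs)))"
proof -
  let ?g = "\<lambda>xs. f (H xs) + p * H xs / real (Suc m) * (f (H xs + 1) - f (H xs))"
  have "measure_pmf.expectation (walk p (Suc (Suc m))) (\<lambda>xs. f (H xs))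
        = (\<Sum>xs\<in>binary_lists (Suc m). pmf (walk p (Suc m)) xs
             * measure_pmf.expectation (walk_step p xs) (\<lambda>ys. f (H ys)))"
    unfolding walk_Suc_Suc
    by (subst pmf_expectation_bind[OF finite_binary_lists _ set_pmf_walk])
       (auto simp: walk_step_def binary_lists_def)
  also have "\<dots> = (\<Sum>xs\<in>binary_lists (Suc m). pmf (walk p (Suc m)) xs * ?g xs)"
    using expectation_walk_step[OF assms] by (intro sum.cong) auto
  also have "\<dots> = measure_pmf.expectation (walk p (Suc m)) ?g"
    using set_pmf_walk by (subst integral_measure_pmf[OF finite_binary_lists]) auto
  finally show ?thesis .
qed

lemma falling_fact_Suc: "falling_fact h (Suc j) = falling_fact h j * (h - real j)"
  unfolding falling_fact_def by simp

lemma falling_fact_Suc_plus_one: "falling_fact (h + 1) (Suc j) = (h + 1) * falling_fact h j"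
  unfolding falling_fact_def prod.lessThan_Suc_shift by (simp add: algebra_simps)

lemma falling_fact_one_Suc: "falling_fact 1 (Suc m) = (if m = 0 then 1 else 0)"
  unfolding falling_fact_def by (auto simp: prod_zero_iff)

lemma falling_fact_step:
  "falling_fact h (Suc m) + c * h * (falling_fact (h + 1) (Suc m) - falling_fact h (Suc m))
   = (1 + real (Suc m) * c) * falling_fact h (Suc m) + real (Suc m) * real m * c * falling_fact h m"
proof -
  have diff: "falling_fact (h + 1) (Suc m) - falling_fact h (Suc m) = real (Suc m) * falling_fact h m"
    unfolding falling_fact_Suc_plus_one unfolding falling_fact_Suc by (simp add: algebra_simps)
  have "h * falling_fact h m = falling_fact h (Suc m) + real m * falling_fact h m"
    unfolding falling_fact_Suc by (simp add: algebra_simps)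
  then show ?thesis
    by (simp only: diff) (simp add: algebra_simps)
qed

lemma expectation_falling_fact_walk_Suc_Suc:
  assumes "0 \<le> p" "p \<le> 1"
  shows "measure_pmf.expectation (walk p (Suc (Suc n))) (\<lambda>xs. falling_fact (H xs) (Suc m))
         = (1 + real (Suc m) * p / real (Suc n))
             * measure_pmf.expectation (walk p (Suc n)) (\<lambda>xs. falling_fact (H xs) (Suc m))
           + real (Suc m) * real m * p / real (Suc n)
             * measure_pmf.expectation (walk p (Suc n)) (\<lambda>xs. falling_fact (H xs) m)"
proof -
  have "finite (set_pmf (walk p (Suc n)))"
    using finite_subset[OF set_pmf_walk finite_binary_lists] .
  note integrable = integrable_measure_pmf_finite[OF this]
  have "measure_pmf.expectation (walk p (Suc (Suc n))) (\<lambda>xs. falling_fact (H xs) (Suc m))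
        = measure_pmf.expectation (walk p (Suc n))
            (\<lambda>xs. (1 + real (Suc m) * (p / real (Suc n))) * falling_fact (H xs) (Suc m)
                  + real (Suc m) * real m * (p / real (Suc n)) * falling_fact (H xs) m)"
    using falling_fact_step[where c = "p / real (Suc n)"]
    by (subst expectation_walk_Suc_Suc[OF assms]) simp
  then show ?thesis
    by (simp add: integrable)
qed

definition forward_diff :: "nat \<Rightarrow> (nat \<Rightarrow> real) \<Rightarrow> real" where
  "forward_diff m b = (\<Sum>j\<le>m. (-1) ^ (m - j) * real (m choose j) * b j)"

lemma forward_diff_const_one: "forward_diff m (\<lambda>_. 1) = (if m = 0 then 1 else 0)"
proof -
  have "forward_diff m (\<lambda>_. 1) = (1 + (-1)) ^ m"
    unfolding forward_diff_def binomial_ring by (simp add: mult.commute)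
  then show ?thesis
    by simp
qed

lemma forward_diff_Suc_weight:
  "forward_diff (Suc m) (\<lambda>j. (real j - real (Suc m)) * b j) = real (Suc m) * forward_diff m b"
proof -
  have summand: "(-1) ^ (Suc m - j) * real (Suc m choose j) * ((real j - real (Suc m)) * b j)
        = real (Suc m) * ((-1) ^ (m - j) * real (m choose j) * b j)" if "j \<le> m" for j
  proof -
    have "(-1::real) ^ (Suc m - j) = - ((-1) ^ (m - j))"
      using that by (simp add: Suc_diff_le)
    then have "(-1) ^ (Suc m - j) * real (Suc m choose j) * ((real j - real (Suc m)) * b j)
               = (-1) ^ (m - j) * b j * (real (Suc m - j) * real (Suc m choose j))"
      using that by (simp add: of_nat_diff algebra_simps)
    also have "real (Suc m - j) * real (Suc m choose j) = real (Suc m) * real (m choose j)"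
      by (metis binomial_absorb_comp diff_Suc_1 of_nat_mult)
    finally show ?thesis
      by (simp add: algebra_simps)
  qed
  have "forward_diff (Suc m) (\<lambda>j. (real j - real (Suc m)) * b j)
        = (\<Sum>j\<le>m. (-1) ^ (Suc m - j) * real (Suc m choose j) * ((real j - real (Suc m)) * b j))"
    unfolding forward_diff_def by simp
  also have "\<dots> = (\<Sum>j\<le>m. real (Suc m) * ((-1) ^ (m - j) * real (m choose j) * b j))"
    by (intro sum.cong refl summand) simp
  finally show ?thesis
    unfolding forward_diff_def by (simp add: sum_distrib_left)
qed

lemma forward_diff_affine_weight:
  "forward_diff m (\<lambda>j. (1 + real (Suc j) * c) * b j)
   = (1 + real (Suc m) * c) * forward_diff m b + real m * c * forward_diff (m - 1) b"
proof -
  have split: "forward_diff m (\<lambda>j. (1 + real (Suc j) * c) * b j)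
      = (1 + real (Suc m) * c) * forward_diff m b + c * forward_diff m (\<lambda>j. (real j - real m) * b j)"
    unfolding forward_diff_def
    by (simp add: sum_distrib_left sum.distrib sum_subtractf algebra_simps)
  show ?thesis
  proof (cases m)
    case 0
    then show ?thesis
      unfolding split by (simp add: forward_diff_def)
  next
    case (Suc m')
    then show ?thesis
      using split unfolding Suc forward_diff_Suc_weight by simp
  qed
qed

lemma a_coef_Suc:
  assumes "0 \<le> p" "n \<noteq> 0"
  shows "a_coef p i (Suc n) = (1 + real i * p / real n) * a_coef p i n"
proof -
  have pos: "real n + real i * p > 0"
    using assms by (simp add: add_pos_nonneg)
  have "Gamma (real n + real i * p + 1) = (real n + real i * p) * Gamma (real n + real i * p)"
    using pos by (intro Gamma_plus1) (auto dest: nonpos_Ints_nonpos)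
  moreover have "Gamma (real n + 1) = real n * Gamma (real n)"
    using assms by (intro Gamma_plus1) (auto dest: nonpos_Ints_nonpos)
  moreover have "Gamma (real n) > 0" "Gamma (1 + real i * p) > 0"
    using assms by (auto intro!: Gamma_real_pos add_pos_nonneg)
  ultimately show ?thesis
    unfolding a_coef_def using assms by (simp add: add_ac field_simps)
qed

lemma a_coef_one:
  assumes "0 \<le> p"
  shows "a_coef p i 1 = 1"
proof -
  have "Gamma (1 + real i * p) > 0"
    using assms by (auto intro!: Gamma_real_pos add_pos_nonneg)
  then show ?thesis
    unfolding a_coef_def by (simp add: add.commute)
qed

lemma expectation_falling_fact_walk:
  assumes p: "0 \<le> p" "p \<le> 1" and "1 \<le> n"
  shows "measure_pmf.expectation (walk p n) (\<lambda>xs. falling_fact (H xs) (Suc m))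
         = fact (Suc m) * forward_diff m (\<lambda>j. a_coef p (Suc j) n)"
  using \<open>1 \<le> n\<close>
proof (induction n arbitrary: m rule: dec_induct)
  case base
  then show ?case
    using a_coef_one[OF p(1)] by (simp add: H_def falling_fact_one_Suc forward_diff_const_one)
next
  case (step n)
  then obtain n' where n: "n = Suc n'"
    using not0_implies_Suc by fastforce
  define c where "c = p / real n"
  define A where "A = (\<lambda>j. a_coef p (Suc j) n)"
  have lower_order_term: "real (Suc m) * real m * p / real n
                 * measure_pmf.expectation (walk p n) (\<lambda>xs. falling_fact (H xs) m)
               = fact (Suc m) * (real m * c * forward_diff (m - 1) A)"
    by (cases m) (simp_all add: step.IH c_def A_def)
  have "measure_pmf.expectation (walk p (Suc n)) (\<lambda>xs. falling_fact (H xs) (Suc m))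
        = fact (Suc m) * ((1 + real (Suc m) * c) * forward_diff m A + real m * c * forward_diff (m - 1) A)"
    using expectation_falling_fact_walk_Suc_Suc[OF p, of n' m] lower_order_term step.IH
    by (simp add: n c_def A_def algebra_simps)
  also have "\<dots> = fact (Suc m) * forward_diff m (\<lambda>j. (1 + real (Suc j) * c) * A j)"
    by (simp only: forward_diff_affine_weight)
  also have "(\<lambda>j. (1 + real (Suc j) * c) * A j) = (\<lambda>j. a_coef p (Suc j) (Suc n))"
    using a_coef_Suc[OF p(1)] step.hyps by (simp add: c_def A_def)
  finally show ?case .
qed

theorem theorem2p1:
  fixes p :: real and k n :: nat
  assumes "0 < p" "p < 1" "1 \<le> k" "1 \<le> n"
  shows "measure_pmf.expectation (walk p n) (\<lambda>xs. falling_fact (H xs) k)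
         = fact k * (\<Sum>i=1..k. (-1) ^ (k - i) * real ((k - 1) choose (i - 1)) * a_coef p i n)"
proof -
  obtain m where k: "k = Suc m"
    using assms(3) not0_implies_Suc by fastforce
  have "(\<Sum>i=1..k. (-1) ^ (k - i) * real ((k - 1) choose (i - 1)) * a_coef p i n)
        = forward_diff m (\<lambda>j. a_coef p (Suc j) n)"
    unfolding forward_diff_def k One_nat_def sum.shift_bounds_cl_Suc_ivl atMost_atLeast0 by simp
  then show ?thesis
    using expectation_falling_fact_walk[of p n m] assms by (simp add: k)
qed

end
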